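(* Let $\mathcal B$ be an extriangulated category with enough projectives and enough injectives, and let $(\mathcal C,\mathcal C^{\perp_1})$ be a cotorsion pair. Then every object $X$ admits: a conflation $X\overset{t}{\rightarrowtail}T_0\twoheadrightarrow C_0$ with $T_0\in\mathcal C^{\perp_1}$, $C_0\in\mathcal C$; a conflation $Y_0\overset{y_0}{\rightarrowtail}P_0\overset{p_0}{\twoheadrightarrow}T_0$ with $P_0$ projective; a conflation $U_0\overset{u_0}{\rightarrowtail}P_0\twoheadrightarrow C_0$ (so $U_0\in\Omega\mathcal C$); and a conflation $Y_0\overset{g_0}{\rightarrowtail}U_0\overset{f_0}{\twoheadrightarrow}X$, such that $u_0g_0=y_0$ and $tf_0=p_0u_0$, and such that $f_0$ is a right $\Omega\mathcal C$-approximation of $X$. Moreover, if $B$ is an object with $\mathbb E(T_0,B)=0$, then $\operatorname{Hom}_{\mathcal B}(g_0,B):\operatorname{Hom}_{\mathcal B}(U_0,B)\to\operatorname{Hom}_{\mathcal B}(Y_0,B)$ is surjective.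
   Context: $(\mathcal B,\mathbb E,\mathfrak s)$ is an extriangulated category (Nakaoka–Palu); conflations $A\rightarrowtail B\twoheadrightarrow C$. Subcategories are full, additive, closed under isomorphisms and finite direct sums. $\mathcal P$ = projectives. $\mathcal C^{\perp_1}=\{B\mid\mathbb E(\mathcal C,B)=0\}$. $\Omega\mathcal C=\operatorname{CoCone}(\mathcal P,\mathcal C)$ is the class of objects $U$ admitting a conflation $U\rightarrowtail P\twoheadrightarrow C$ with $P\in\mathcal P$, $C\in\mathcal C$. A cotorsion pair $(\mathcal U,\mathcal V)$: subcategories closed under summands with $\mathbb E(\mathcal U,\mathcal V)=0$ and every $B$ admits conflations $V_B\rightarrowtail U_B\twoheadrightarrow B$, $B\rightarrowtail V^B\twoheadrightarrow U^B$ with $U_B,U^B\in\mathcal U$, $V_B,V^B\in\mathcal V$. *)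

theory Defs
  imports Main
begin

text \<open>Morphisms carry a domain and codomain; the extension groups are
  Ext C A = E(C,A) (contravariant in C, covariant in A).
  push C a d = a_* d for d in E(C, Dom a);  pull A c d = c^* d for d in E(Cod c, A).
  realizes d x y means that the sequence A -x-> Bm -y-> C belongs to the
  equivalence class s(d), where d is in E(C,A).\<close>

record ('o,'m,'e) extri =
  Ob :: "'o set"
  Mor :: "'m set"
  Dom :: "'m \<Rightarrow> 'o"
  Cod :: "'m \<Rightarrow> 'o"
  cmp :: "'m \<Rightarrow> 'm \<Rightarrow> 'm"
  idm :: "'o \<Rightarrow> 'm"
  mzero :: "'o \<Rightarrow> 'o \<Rightarrow> 'm"
  madd :: "'m \<Rightarrow> 'm \<Rightarrow> 'm"
  mneg :: "'m \<Rightarrow> 'm"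
  Ext :: "'o \<Rightarrow> 'o \<Rightarrow> 'e set"
  ezero :: "'o \<Rightarrow> 'o \<Rightarrow> 'e"
  eadd :: "'o \<Rightarrow> 'o \<Rightarrow> 'e \<Rightarrow> 'e \<Rightarrow> 'e"
  eneg :: "'o \<Rightarrow> 'o \<Rightarrow> 'e \<Rightarrow> 'e"
  push :: "'o \<Rightarrow> 'm \<Rightarrow> 'e \<Rightarrow> 'e"
  pull :: "'o \<Rightarrow> 'm \<Rightarrow> 'e \<Rightarrow> 'e"
  realizes :: "'e \<Rightarrow> 'm \<Rightarrow> 'm \<Rightarrow> bool"

definition hom :: "('o,'m,'e) extri \<Rightarrow> 'o \<Rightarrow> 'o \<Rightarrow> 'm set" where
  "hom B X Y = {f \<in> Mor B. Dom B f = X \<and> Cod B f = Y}"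

definition category :: "('o,'m,'e) extri \<Rightarrow> bool" where
  "category B \<longleftrightarrow>
     (\<forall>f\<in>Mor B. Dom B f \<in> Ob B \<and> Cod B f \<in> Ob B) \<and>
     (\<forall>X\<in>Ob B. idm B X \<in> hom B X X) \<and>
     (\<forall>X Y Z f g. f \<in> hom B X Y \<longrightarrow> g \<in> hom B Y Z \<longrightarrow> cmp B g f \<in> hom B X Z) \<and>
     (\<forall>X Y f. f \<in> hom B X Y \<longrightarrow> cmp B f (idm B X) = f \<and> cmp B (idm B Y) f = f) \<and>
     (\<forall>W X Y Z f g h. f \<in> hom B W X \<longrightarrow> g \<in> hom B X Y \<longrightarrow> h \<in> hom B Y Z \<longrightarrow>
        cmp B h (cmp B g f) = cmp B (cmp B h g) f)"

definition preadditive :: "('o,'m,'e) extri \<Rightarrow> bool" where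
  "preadditive B \<longleftrightarrow> category B \<and>
     (\<forall>X\<in>Ob B. \<forall>Y\<in>Ob B.
        mzero B X Y \<in> hom B X Y \<and>
        (\<forall>f\<in>hom B X Y. \<forall>g\<in>hom B X Y. madd B f g \<in> hom B X Y) \<and>
        (\<forall>f\<in>hom B X Y. mneg B f \<in> hom B X Y) \<and>
        (\<forall>f\<in>hom B X Y. \<forall>g\<in>hom B X Y. \<forall>h\<in>hom B X Y.
            madd B (madd B f g) h = madd B f (madd B g h)) \<and>
        (\<forall>f\<in>hom B X Y. \<forall>g\<in>hom B X Y. madd B f g = madd B g f) \<and>
        (\<forall>f\<in>hom B X Y. madd B f (mzero B X Y) = f) \<and>
        (\<forall>f\<in>hom B X Y. madd B f (mneg B f) = mzero B X Y)) \<and>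
     (\<forall>X Y Z f g g'. f \<in> hom B X Y \<longrightarrow> g \<in> hom B Y Z \<longrightarrow> g' \<in> hom B Y Z \<longrightarrow>
        cmp B (madd B g g') f = madd B (cmp B g f) (cmp B g' f)) \<and>
     (\<forall>X Y Z f f' h. f \<in> hom B X Y \<longrightarrow> f' \<in> hom B X Y \<longrightarrow> h \<in> hom B Y Z \<longrightarrow>
        cmp B h (madd B f f') = madd B (cmp B h f) (cmp B h f'))"

definition is_zero_obj :: "('o,'m,'e) extri \<Rightarrow> 'o \<Rightarrow> bool" where
  "is_zero_obj B Z \<longleftrightarrow> Z \<in> Ob B \<and>
     (\<forall>X\<in>Ob B. hom B Z X = {mzero B Z X} \<and> hom B X Z = {mzero B X Z})"

definition is_biprod :: "('o,'m,'e) extri \<Rightarrow> 'o \<Rightarrow> 'o \<Rightarrow> 'o \<Rightarrow> 'm \<Rightarrow> 'm \<Rightarrow> 'm \<Rightarrow> 'm \<Rightarrow> bool" where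
  "is_biprod B X Y S i1 i2 p1 p2 \<longleftrightarrow> S \<in> Ob B \<and>
     i1 \<in> hom B X S \<and> i2 \<in> hom B Y S \<and> p1 \<in> hom B S X \<and> p2 \<in> hom B S Y \<and>
     cmp B p1 i1 = idm B X \<and> cmp B p2 i2 = idm B Y \<and>
     cmp B p1 i2 = mzero B Y X \<and> cmp B p2 i1 = mzero B X Y \<and>
     madd B (cmp B i1 p1) (cmp B i2 p2) = idm B S"

definition additive :: "('o,'m,'e) extri \<Rightarrow> bool" where
  "additive B \<longleftrightarrow> preadditive B \<and> (\<exists>Z. is_zero_obj B Z) \<and>
     (\<forall>X\<in>Ob B. \<forall>Y\<in>Ob B. \<exists>S i1 i2 p1 p2. is_biprod B X Y S i1 i2 p1 p2)"

definition iso :: "('o,'m,'e) extri \<Rightarrow> 'm \<Rightarrow> 'o \<Rightarrow> 'o \<Rightarrow> bool" where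
  "iso B f X Y \<longleftrightarrow> f \<in> hom B X Y \<and>
     (\<exists>g\<in>hom B Y X. cmp B g f = idm B X \<and> cmp B f g = idm B Y)"

definition ET1 :: "('o,'m,'e) extri \<Rightarrow> bool" where
  "ET1 B \<longleftrightarrow>
     (\<forall>C\<in>Ob B. \<forall>A\<in>Ob B.
        ezero B C A \<in> Ext B C A \<and>
        (\<forall>d\<in>Ext B C A. \<forall>d'\<in>Ext B C A. eadd B C A d d' \<in> Ext B C A) \<and>
        (\<forall>d\<in>Ext B C A. eneg B C A d \<in> Ext B C A) \<and>
        (\<forall>d\<in>Ext B C A. \<forall>d'\<in>Ext B C A. \<forall>d''\<in>Ext B C A.
           eadd B C A (eadd B C A d d') d'' = eadd B C A d (eadd B C A d' d'')) \<and>
        (\<forall>d\<in>Ext B C A. \<forall>d'\<in>Ext B C A. eadd B C A d d' = eadd B C A d' d) \<and>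
        (\<forall>d\<in>Ext B C A. eadd B C A d (ezero B C A) = d) \<and>
        (\<forall>d\<in>Ext B C A. eadd B C A d (eneg B C A d) = ezero B C A)) \<and>
     (\<forall>C A A' a d. C \<in> Ob B \<longrightarrow> a \<in> hom B A A' \<longrightarrow> d \<in> Ext B C A \<longrightarrow>
        push B C a d \<in> Ext B C A') \<and>
     (\<forall>A C C' c d. A \<in> Ob B \<longrightarrow> c \<in> hom B C' C \<longrightarrow> d \<in> Ext B C A \<longrightarrow>
        pull B A c d \<in> Ext B C' A) \<and>
     (\<forall>C A d. C \<in> Ob B \<longrightarrow> A \<in> Ob B \<longrightarrow> d \<in> Ext B C A \<longrightarrow>
        push B C (idm B A) d = d \<and> pull B A (idm B C) d = d) \<and>
     (\<forall>C A A' A'' a a' d. C \<in> Ob B \<longrightarrow> a \<in> hom B A A' \<longrightarrow> a' \<in> hom B A' A'' \<longrightarrow>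
        d \<in> Ext B C A \<longrightarrow> push B C (cmp B a' a) d = push B C a' (push B C a d)) \<and>
     (\<forall>A C C' C'' c c' d. A \<in> Ob B \<longrightarrow> c \<in> hom B C' C \<longrightarrow> c' \<in> hom B C'' C' \<longrightarrow>
        d \<in> Ext B C A \<longrightarrow> pull B A (cmp B c c') d = pull B A c' (pull B A c d)) \<and>
     (\<forall>A A' C C' a c d. a \<in> hom B A A' \<longrightarrow> c \<in> hom B C' C \<longrightarrow> d \<in> Ext B C A \<longrightarrow>
        push B C' a (pull B A c d) = pull B A' c (push B C a d)) \<and>
     (\<forall>C A A' a d d'. C \<in> Ob B \<longrightarrow> a \<in> hom B A A' \<longrightarrow> d \<in> Ext B C A \<longrightarrow> d' \<in> Ext B C A \<longrightarrow>
        push B C a (eadd B C A d d') = eadd B C A' (push B C a d) (push B C a d')) \<and>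
     (\<forall>A C C' c d d'. A \<in> Ob B \<longrightarrow> c \<in> hom B C' C \<longrightarrow> d \<in> Ext B C A \<longrightarrow> d' \<in> Ext B C A \<longrightarrow>
        pull B A c (eadd B C A d d') = eadd B C' A (pull B A c d) (pull B A c d')) \<and>
     (\<forall>C A A' a a' d. C \<in> Ob B \<longrightarrow> a \<in> hom B A A' \<longrightarrow> a' \<in> hom B A A' \<longrightarrow> d \<in> Ext B C A \<longrightarrow>
        push B C (madd B a a') d = eadd B C A' (push B C a d) (push B C a' d)) \<and>
     (\<forall>A C C' c c' d. A \<in> Ob B \<longrightarrow> c \<in> hom B C' C \<longrightarrow> c' \<in> hom B C' C \<longrightarrow> d \<in> Ext B C A \<longrightarrow>
        pull B A (madd B c c') d = eadd B C' A (pull B A c d) (pull B A c' d))"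

definition seq_equiv :: "('o,'m,'e) extri \<Rightarrow> 'm \<Rightarrow> 'm \<Rightarrow> 'm \<Rightarrow> 'm \<Rightarrow> bool" where
  "seq_equiv B x y x' y' \<longleftrightarrow>
     (\<exists>b. iso B b (Cod B x) (Cod B x') \<and> cmp B b x = x' \<and> cmp B y' b = y)"

definition ET2 :: "('o,'m,'e) extri \<Rightarrow> bool" where
  "ET2 B \<longleftrightarrow>
     (\<forall>d x y. realizes B d x y \<longrightarrow>
        (\<exists>A Bm C. x \<in> hom B A Bm \<and> y \<in> hom B Bm C \<and> d \<in> Ext B C A)) \<and>
     (\<forall>C\<in>Ob B. \<forall>A\<in>Ob B. \<forall>d\<in>Ext B C A.
        \<exists>Bm x y. x \<in> hom B A Bm \<and> y \<in> hom B Bm C \<and> realizes B d x y) \<and>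
     (\<forall>d x y x' y'. realizes B d x y \<longrightarrow> realizes B d x' y' \<longrightarrow>
        Dom B x = Dom B x' \<longrightarrow> Cod B y = Cod B y' \<longrightarrow> seq_equiv B x y x' y') \<and>
     (\<forall>d x y x' y'. realizes B d x y \<longrightarrow> x' \<in> Mor B \<longrightarrow> y' \<in> Mor B \<longrightarrow>
        Dom B x = Dom B x' \<longrightarrow> Cod B y = Cod B y' \<longrightarrow> seq_equiv B x y x' y' \<longrightarrow>
        realizes B d x' y') \<and>
     (\<forall>A Bm C A' Bm' C' x y x' y' d d' a c.
        x \<in> hom B A Bm \<longrightarrow> y \<in> hom B Bm C \<longrightarrow> x' \<in> hom B A' Bm' \<longrightarrow> y' \<in> hom B Bm' C' \<longrightarrow>
        realizes B d x y \<longrightarrow> realizes B d' x' y' \<longrightarrow>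
        a \<in> hom B A A' \<longrightarrow> c \<in> hom B C C' \<longrightarrow> push B C a d = pull B A' c d' \<longrightarrow>
        (\<exists>b\<in>hom B Bm Bm'. cmp B b x = cmp B x' a \<and> cmp B y' b = cmp B c y)) \<and>
     (\<forall>A C S i1 i2 p1 p2. A \<in> Ob B \<longrightarrow> C \<in> Ob B \<longrightarrow> is_biprod B A C S i1 i2 p1 p2 \<longrightarrow>
        realizes B (ezero B C A) i1 p2) \<and>
     (\<forall>A Bm C A' Bm' C' x y x' y' d d'
         SA iA iA' pA pA' SB jB jB' qB qB' SC kC kC' rC rC' e.
        x \<in> hom B A Bm \<longrightarrow> y \<in> hom B Bm C \<longrightarrow> x' \<in> hom B A' Bm' \<longrightarrow> y' \<in> hom B Bm' C' \<longrightarrow>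
        realizes B d x y \<longrightarrow> realizes B d' x' y' \<longrightarrow>
        is_biprod B A A' SA iA iA' pA pA' \<longrightarrow>
        is_biprod B Bm Bm' SB jB jB' qB qB' \<longrightarrow>
        is_biprod B C C' SC kC kC' rC rC' \<longrightarrow>
        e \<in> Ext B SC SA \<longrightarrow>
        push B C pA (pull B SA kC e) = d \<longrightarrow>
        push B C' pA' (pull B SA kC' e) = d' \<longrightarrow>
        push B C' pA (pull B SA kC' e) = ezero B C' A \<longrightarrow>
        push B C pA' (pull B SA kC e) = ezero B C A' \<longrightarrow>
        realizes B e (madd B (cmp B jB (cmp B x pA)) (cmp B jB' (cmp B x' pA')))
                     (madd B (cmp B kC (cmp B y qB)) (cmp B kC' (cmp B y' qB'))))"

definition ET3 :: "('o,'m,'e) extri \<Rightarrow> bool" where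
  "ET3 B \<longleftrightarrow>
     (\<forall>A Bm C A' Bm' C' x y x' y' d d' a b.
        x \<in> hom B A Bm \<longrightarrow> y \<in> hom B Bm C \<longrightarrow> x' \<in> hom B A' Bm' \<longrightarrow> y' \<in> hom B Bm' C' \<longrightarrow>
        realizes B d x y \<longrightarrow> realizes B d' x' y' \<longrightarrow>
        a \<in> hom B A A' \<longrightarrow> b \<in> hom B Bm Bm' \<longrightarrow> cmp B b x = cmp B x' a \<longrightarrow>
        (\<exists>c\<in>hom B C C'. cmp B c y = cmp B y' b \<and> push B C a d = pull B A' c d'))"

definition ET3op :: "('o,'m,'e) extri \<Rightarrow> bool" where
  "ET3op B \<longleftrightarrow>
     (\<forall>A Bm C A' Bm' C' x y x' y' d d' b c.
        x \<in> hom B A Bm \<longrightarrow> y \<in> hom B Bm C \<longrightarrow> x' \<in> hom B A' Bm' \<longrightarrow> y' \<in> hom B Bm' C' \<longrightarrow>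
        realizes B d x y \<longrightarrow> realizes B d' x' y' \<longrightarrow>
        b \<in> hom B Bm Bm' \<longrightarrow> c \<in> hom B C C' \<longrightarrow> cmp B c y = cmp B y' b \<longrightarrow>
        (\<exists>a\<in>hom B A A'. cmp B b x = cmp B x' a \<and> push B C a d = pull B A' c d'))"

definition ET4 :: "('o,'m,'e) extri \<Rightarrow> bool" where
  "ET4 B \<longleftrightarrow>
     (\<forall>A Bo C D F f f' g g' d d'.
        f \<in> hom B A Bo \<longrightarrow> f' \<in> hom B Bo D \<longrightarrow> g \<in> hom B Bo C \<longrightarrow> g' \<in> hom B C F \<longrightarrow>
        realizes B d f f' \<longrightarrow> realizes B d' g g' \<longrightarrow>
        (\<exists>E h' dd e d''. E \<in> Ob B \<and> h' \<in> hom B C E \<and> dd \<in> hom B D E \<and> e \<in> hom B E F \<and>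
           d'' \<in> Ext B E A \<and>
           realizes B d'' (cmp B g f) h' \<and>
           realizes B (push B F f' d') dd e \<and>
           pull B A dd d'' = d \<and>
           push B E f d'' = pull B Bo e d' \<and>
           cmp B dd f' = cmp B h' g \<and> cmp B e h' = g'))"

definition ET4op :: "('o,'m,'e) extri \<Rightarrow> bool" where
  "ET4op B \<longleftrightarrow>
     (\<forall>D A Bo F C f f' g g' d d'.
        f \<in> hom B D A \<longrightarrow> f' \<in> hom B A Bo \<longrightarrow> g \<in> hom B F Bo \<longrightarrow> g' \<in> hom B Bo C \<longrightarrow>
        realizes B d f f' \<longrightarrow> realizes B d' g g' \<longrightarrow>
        (\<exists>E h dd e d''. E \<in> Ob B \<and> h \<in> hom B E A \<and> dd \<in> hom B D E \<and> e \<in> hom B E F \<and>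
           d'' \<in> Ext B C E \<and>
           realizes B d'' h (cmp B g' f') \<and>
           realizes B (pull B D g d) dd e \<and>
           d' = push B C e d'' \<and>
           push B Bo dd d = pull B E g' d'' \<and>
           cmp B h dd = f \<and> cmp B f' h = cmp B g e))"

definition extriangulated :: "('o,'m,'e) extri \<Rightarrow> bool" where
  "extriangulated B \<longleftrightarrow> additive B \<and> ET1 B \<and> ET2 B \<and> ET3 B \<and> ET3op B \<and> ET4 B \<and> ET4op B"

definition conflation :: "('o,'m,'e) extri \<Rightarrow> 'o \<Rightarrow> 'o \<Rightarrow> 'o \<Rightarrow> 'm \<Rightarrow> 'm \<Rightarrow> bool" where
  "conflation B A Bm C x y \<longleftrightarrow> x \<in> hom B A Bm \<and> y \<in> hom B Bm C \<and>
     (\<exists>d\<in>Ext B C A. realizes B d x y)"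

definition projective :: "('o,'m,'e) extri \<Rightarrow> 'o \<Rightarrow> bool" where
  "projective B P \<longleftrightarrow> P \<in> Ob B \<and>
     (\<forall>A Bm C x y c. conflation B A Bm C x y \<longrightarrow> c \<in> hom B P C \<longrightarrow>
        (\<exists>b\<in>hom B P Bm. cmp B y b = c))"

definition injective :: "('o,'m,'e) extri \<Rightarrow> 'o \<Rightarrow> bool" where
  "injective B I \<longleftrightarrow> I \<in> Ob B \<and>
     (\<forall>A Bm C x y a. conflation B A Bm C x y \<longrightarrow> a \<in> hom B A I \<longrightarrow>
        (\<exists>b\<in>hom B Bm I. cmp B b x = a))"

definition enough_projectives :: "('o,'m,'e) extri \<Rightarrow> bool" where
  "enough_projectives B \<longleftrightarrow>
     (\<forall>C\<in>Ob B. \<exists>A P x y. conflation B A P C x y \<and> projective B P)"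

definition enough_injectives :: "('o,'m,'e) extri \<Rightarrow> bool" where
  "enough_injectives B \<longleftrightarrow>
     (\<forall>A\<in>Ob B. \<exists>I C x y. conflation B A I C x y \<and> injective B I)"

text \<open>Subcategories: full, additive, closed under isomorphisms and finite direct sums
  (a subcategory is identified with its class of objects).\<close>
definition subcat :: "('o,'m,'e) extri \<Rightarrow> 'o set \<Rightarrow> bool" where
  "subcat B X \<longleftrightarrow> X \<subseteq> Ob B \<and>
     (\<forall>Y Y' f. Y \<in> X \<longrightarrow> iso B f Y Y' \<longrightarrow> Y' \<in> X) \<and>
     (\<exists>Z. is_zero_obj B Z \<and> Z \<in> X) \<and>
     (\<forall>Y1 Y2 S i1 i2 p1 p2. Y1 \<in> X \<longrightarrow> Y2 \<in> X \<longrightarrow> is_biprod B Y1 Y2 S i1 i2 p1 p2 \<longrightarrow> S \<in> X)"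

definition closed_summands :: "('o,'m,'e) extri \<Rightarrow> 'o set \<Rightarrow> bool" where
  "closed_summands B X \<longleftrightarrow>
     (\<forall>Y1 Y2 S i1 i2 p1 p2. S \<in> X \<longrightarrow> is_biprod B Y1 Y2 S i1 i2 p1 p2 \<longrightarrow> Y1 \<in> X \<and> Y2 \<in> X)"

definition Ext_zero :: "('o,'m,'e) extri \<Rightarrow> 'o \<Rightarrow> 'o \<Rightarrow> bool" where
  "Ext_zero B C A \<longleftrightarrow> Ext B C A = {ezero B C A}"

definition perp1 :: "('o,'m,'e) extri \<Rightarrow> 'o set \<Rightarrow> 'o set" where
  "perp1 B X = {Y \<in> Ob B. \<forall>C\<in>X. Ext_zero B C Y}"

definition Omega :: "('o,'m,'e) extri \<Rightarrow> 'o set \<Rightarrow> 'o set" where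
  "Omega B X = {U. \<exists>P C x y. conflation B U P C x y \<and> projective B P \<and> C \<in> X}"

definition cotorsion_pair :: "('o,'m,'e) extri \<Rightarrow> 'o set \<Rightarrow> 'o set \<Rightarrow> bool" where
  "cotorsion_pair B U V \<longleftrightarrow>
     subcat B U \<and> subcat B V \<and> closed_summands B U \<and> closed_summands B V \<and>
     (\<forall>X\<in>U. \<forall>Y\<in>V. Ext_zero B X Y) \<and>
     (\<forall>X\<in>Ob B.
        (\<exists>VX UX x y. conflation B VX UX X x y \<and> VX \<in> V \<and> UX \<in> U) \<and>
        (\<exists>VX UX x y. conflation B X VX UX x y \<and> VX \<in> V \<and> UX \<in> U))"

definition right_approx :: "('o,'m,'e) extri \<Rightarrow> 'o set \<Rightarrow> 'm \<Rightarrow> 'o \<Rightarrow> 'o \<Rightarrow> bool" where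
  "right_approx B Xs f U X \<longleftrightarrow> U \<in> Xs \<and> f \<in> hom B U X \<and>
     (\<forall>U'\<in>Xs. \<forall>h\<in>hom B U' X. \<exists>k\<in>hom B U' U. cmp B f k = h)"

end

theory Submission
  imports Defs
begin

(* Take a conflation X -t-> T0 -> C0 with T0 in C^perp1 and C0 in C, a conflation
   Y0 -> P0 -> T0 realizing delta with P0 projective, and apply (ET4)^op to the composable
   deflations P0 -> T0 -> C0. This yields U0 -> P0 -> C0, so U0 is in Omega C, together with
   Y0 -g0-> U0 -f0-> X realizing t^* delta. A map h : U' -> X lifts along f0 iff
   (t h)^* delta = 0; for U' in Omega C this holds because E(C, T0) = 0 makes t h factor
   through a projective, and delta vanishes when pulled back to a projective. Extending a map
   along g0 reduces to extending it along y0 = u0 g0, possible whenever E(T0, -) vanishes. *)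

locale extriangulated_category =
  fixes B :: "('o,'m,'e) extri"
  assumes extriangulated: "extriangulated B"
begin

lemma additive: "additive B"
  and ET1: "ET1 B" and ET2: "ET2 B" and ET3: "ET3 B" and ET4op: "ET4op B"
  using extriangulated by (simp_all add: extriangulated_def)

lemma preadditive: "preadditive B"
  using additive by (simp add: additive_def)

lemma category: "category B"
  using preadditive by (simp add: preadditive_def)

lemma hom_Ob: "f \<in> hom B X Y \<Longrightarrow> X \<in> Ob B" "f \<in> hom B X Y \<Longrightarrow> Y \<in> Ob B"
  using category by (auto simp: category_def hom_def)

lemma comp_hom: "f \<in> hom B X Y \<Longrightarrow> g \<in> hom B Y Z \<Longrightarrow> cmp B g f \<in> hom B X Z"
  using category by (simp add: category_def)

lemma id_hom: "X \<in> Ob B \<Longrightarrow> idm B X \<in> hom B X X"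
  using category by (simp add: category_def)

lemma comp_id: "f \<in> hom B X Y \<Longrightarrow> cmp B f (idm B X) = f"
  and id_comp: "f \<in> hom B X Y \<Longrightarrow> cmp B (idm B Y) f = f"
  using category by (simp_all add: category_def)

lemma comp_assoc:
  "f \<in> hom B W X \<Longrightarrow> g \<in> hom B X Y \<Longrightarrow> h \<in> hom B Y Z \<Longrightarrow>
    cmp B h (cmp B g f) = cmp B (cmp B h g) f"
  using category by (simp add: category_def)

lemma zero_hom: "X \<in> Ob B \<Longrightarrow> Y \<in> Ob B \<Longrightarrow> mzero B X Y \<in> hom B X Y"
  using preadditive by (simp add: preadditive_def)

lemma madd_hom: "f \<in> hom B X Y \<Longrightarrow> g \<in> hom B X Y \<Longrightarrow> madd B f g \<in> hom B X Y"
  and mneg_hom: "f \<in> hom B X Y \<Longrightarrow> mneg B f \<in> hom B X Y"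
  using preadditive hom_Ob[of f X Y] by (simp_all add: preadditive_def)

lemma madd_assoc:
  "f \<in> hom B X Y \<Longrightarrow> g \<in> hom B X Y \<Longrightarrow> h \<in> hom B X Y \<Longrightarrow>
    madd B (madd B f g) h = madd B f (madd B g h)"
  and madd_commute: "f \<in> hom B X Y \<Longrightarrow> g \<in> hom B X Y \<Longrightarrow> madd B f g = madd B g f"
  and madd_zero: "f \<in> hom B X Y \<Longrightarrow> madd B f (mzero B X Y) = f"
  and madd_mneg: "f \<in> hom B X Y \<Longrightarrow> madd B f (mneg B f) = mzero B X Y"
  using preadditive hom_Ob[of f X Y] unfolding preadditive_def by metis+

lemma madd_comp:
  "f \<in> hom B X Y \<Longrightarrow> g \<in> hom B Y Z \<Longrightarrow> g' \<in> hom B Y Z \<Longrightarrow>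
    cmp B (madd B g g') f = madd B (cmp B g f) (cmp B g' f)"
  and comp_madd:
  "f \<in> hom B X Y \<Longrightarrow> f' \<in> hom B X Y \<Longrightarrow> h \<in> hom B Y Z \<Longrightarrow>
    cmp B h (madd B f f') = madd B (cmp B h f) (cmp B h f')"
  using preadditive by (simp_all add: preadditive_def)

lemma madd_idem_zero:
  assumes z: "z \<in> hom B X Y" and idem: "madd B z z = z"
  shows "z = mzero B X Y"
proof -
  have "z = madd B z (madd B z (mneg B z))"
    using madd_mneg[OF z] madd_zero[OF z] by simp
  also have "\<dots> = mzero B X Y"
    using madd_assoc[OF z z mneg_hom[OF z]] idem madd_mneg[OF z] by simp
  finally show ?thesis .
qed

lemma comp_zero:
  assumes X: "X \<in> Ob B" and g: "g \<in> hom B Y Z"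
  shows "cmp B g (mzero B X Y) = mzero B X Z"
proof -
  have z: "mzero B X Y \<in> hom B X Y"
    using zero_hom[OF X hom_Ob(1)[OF g]] .
  have "madd B (cmp B g (mzero B X Y)) (cmp B g (mzero B X Y)) = cmp B g (mzero B X Y)"
    using comp_madd[OF z z g] madd_zero[OF z] by simp
  then show ?thesis
    using madd_idem_zero[OF comp_hom[OF z g]] by simp
qed

lemma ezero_Ext: "C \<in> Ob B \<Longrightarrow> A \<in> Ob B \<Longrightarrow> ezero B C A \<in> Ext B C A"
  and eneg_Ext: "C \<in> Ob B \<Longrightarrow> A \<in> Ob B \<Longrightarrow> d \<in> Ext B C A \<Longrightarrow> eneg B C A d \<in> Ext B C A"
  using ET1 by (simp_all add: ET1_def)

lemma eadd_assoc:
  "C \<in> Ob B \<Longrightarrow> A \<in> Ob B \<Longrightarrow> d \<in> Ext B C A \<Longrightarrow> d' \<in> Ext B C A \<Longrightarrow> d'' \<in> Ext B C A \<Longrightarrow>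
    eadd B C A (eadd B C A d d') d'' = eadd B C A d (eadd B C A d' d'')"
  and eadd_zero: "C \<in> Ob B \<Longrightarrow> A \<in> Ob B \<Longrightarrow> d \<in> Ext B C A \<Longrightarrow> eadd B C A d (ezero B C A) = d"
  and eadd_eneg:
  "C \<in> Ob B \<Longrightarrow> A \<in> Ob B \<Longrightarrow> d \<in> Ext B C A \<Longrightarrow> eadd B C A d (eneg B C A d) = ezero B C A"
  using ET1 unfolding ET1_def by metis+

lemma push_Ext: "C \<in> Ob B \<Longrightarrow> a \<in> hom B A A' \<Longrightarrow> d \<in> Ext B C A \<Longrightarrow> push B C a d \<in> Ext B C A'"
  and pull_Ext: "A \<in> Ob B \<Longrightarrow> c \<in> hom B C' C \<Longrightarrow> d \<in> Ext B C A \<Longrightarrow> pull B A c d \<in> Ext B C' A"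
  and push_id: "C \<in> Ob B \<Longrightarrow> A \<in> Ob B \<Longrightarrow> d \<in> Ext B C A \<Longrightarrow> push B C (idm B A) d = d"
  and pull_id: "C \<in> Ob B \<Longrightarrow> A \<in> Ob B \<Longrightarrow> d \<in> Ext B C A \<Longrightarrow> pull B A (idm B C) d = d"
  using ET1 by (simp_all add: ET1_def)

lemma pull_comp:
  "A \<in> Ob B \<Longrightarrow> c \<in> hom B C' C \<Longrightarrow> c' \<in> hom B C'' C' \<Longrightarrow> d \<in> Ext B C A \<Longrightarrow>
    pull B A (cmp B c c') d = pull B A c' (pull B A c d)"
  and pull_eadd:
  "A \<in> Ob B \<Longrightarrow> c \<in> hom B C' C \<Longrightarrow> d \<in> Ext B C A \<Longrightarrow> d' \<in> Ext B C A \<Longrightarrow>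
    pull B A c (eadd B C A d d') = eadd B C' A (pull B A c d) (pull B A c d')"
  using ET1 by (simp_all add: ET1_def)

lemma eadd_idem_zero:
  assumes C: "C \<in> Ob B" and A: "A \<in> Ob B" and w: "w \<in> Ext B C A" and idem: "eadd B C A w w = w"
  shows "w = ezero B C A"
proof -
  have "w = eadd B C A w (eadd B C A w (eneg B C A w))"
    using eadd_eneg[OF C A w] eadd_zero[OF C A w] by simp
  also have "\<dots> = ezero B C A"
    using eadd_assoc[OF C A w w eneg_Ext[OF C A w]] idem eadd_eneg[OF C A w] by simp
  finally show ?thesis .
qed

lemma pull_ezero:
  assumes A: "A \<in> Ob B" and c: "c \<in> hom B C' C"
  shows "pull B A c (ezero B C A) = ezero B C' A"
proof -
  have C: "C \<in> Ob B" and C': "C' \<in> Ob B"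
    using hom_Ob[OF c] by auto
  have z: "ezero B C A \<in> Ext B C A"
    using ezero_Ext[OF C A] .
  have "eadd B C' A (pull B A c (ezero B C A)) (pull B A c (ezero B C A)) = pull B A c (ezero B C A)"
    using pull_eadd[OF A c z z] eadd_zero[OF C A z] by simp
  then show ?thesis
    using eadd_idem_zero[OF C' A pull_Ext[OF A c z]] by simp
qed

lemma realizes_split:
  "A \<in> Ob B \<Longrightarrow> C \<in> Ob B \<Longrightarrow> is_biprod B A C S i1 i2 p1 p2 \<Longrightarrow> realizes B (ezero B C A) i1 p2"
  using ET2 by (simp add: ET2_def)

lemma ET2_morphism:
  assumes "x \<in> hom B A M" "y \<in> hom B M C" "x' \<in> hom B A' M'" "y' \<in> hom B M' C'"
    and "realizes B d x y" "realizes B d' x' y'" "a \<in> hom B A A'" "c \<in> hom B C C'"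
    and "push B C a d = pull B A' c d'"
  shows "\<exists>b\<in>hom B M M'. cmp B b x = cmp B x' a \<and> cmp B y' b = cmp B c y"
  using ET2 assms unfolding ET2_def by (elim conjE) metis

lemma ET3_morphism:
  assumes "x \<in> hom B A M" "y \<in> hom B M C" "x' \<in> hom B A' M'" "y' \<in> hom B M' C'"
    and "realizes B d x y" "realizes B d' x' y'" "a \<in> hom B A A'" "b \<in> hom B M M'"
    and "cmp B b x = cmp B x' a"
  shows "\<exists>c\<in>hom B C C'. cmp B c y = cmp B y' b \<and> push B C a d = pull B A' c d'"
  using ET3 assms unfolding ET3_def by metis

lemma ET4opE:
  assumes "f \<in> hom B D A" "f' \<in> hom B A Bo" "g \<in> hom B F Bo" "g' \<in> hom B Bo C"
    and "realizes B d f f'" "realizes B d' g g'"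
  obtains E h dd e d'' where "h \<in> hom B E A" "dd \<in> hom B D E" "e \<in> hom B E F"
    "d'' \<in> Ext B C E" "realizes B d'' h (cmp B g' f')" "realizes B (pull B D g d) dd e"
    "cmp B h dd = f" "cmp B f' h = cmp B g e"
  using ET4op assms unfolding ET4op_def by metis

lemma biprod_exists:
  assumes "X \<in> Ob B" "Y \<in> Ob B"
  obtains S i1 i2 p1 p2 where "is_biprod B X Y S i1 i2 p1 p2"
  using additive assms unfolding additive_def by blast

lemma pull_deflation_ezero:
  assumes x: "x \<in> hom B A M" and y: "y \<in> hom B M C" and r: "realizes B d x y"
    and d: "d \<in> Ext B C A"
  shows "pull B A y d = ezero B M A"
proof -
  have A: "A \<in> Ob B" and M: "M \<in> Ob B"
    using hom_Ob[OF x] by auto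
  obtain S i1 i2 p1 p2 where bp: "is_biprod B A M S i1 i2 p1 p2"
    using biprod_exists[OF A M] .
  then have i1: "i1 \<in> hom B A S" and i2: "i2 \<in> hom B M S" and p1: "p1 \<in> hom B S A"
    and p2: "p2 \<in> hom B S M" and p1i1: "cmp B p1 i1 = idm B A" and p2i2: "cmp B p2 i2 = idm B M"
    and p1i2: "cmp B p1 i2 = mzero B M A" and p2i1: "cmp B p2 i1 = mzero B A M"
    unfolding is_biprod_def by auto
  have xp1: "cmp B x p1 \<in> hom B S M"
    using comp_hom[OF p1 x] .
  define b where "b = madd B (cmp B x p1) p2"
  have b: "b \<in> hom B S M"
    unfolding b_def using madd_hom[OF xp1 p2] .
  have bi1: "cmp B b i1 = cmp B x (idm B A)"
    using madd_comp[OF i1 xp1 p2] comp_assoc[OF i1 p1 x] p1i1 p2i1 comp_id[OF x] madd_zero[OF x]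
    unfolding b_def by simp
  have bi2: "cmp B b i2 = idm B M"
    using madd_comp[OF i2 xp1 p2] comp_assoc[OF i2 p1 x] p1i2 p2i2 comp_zero[OF M x]
      madd_commute[OF zero_hom[OF M M] id_hom[OF M]] madd_zero[OF id_hom[OF M]]
    unfolding b_def by simp
  obtain c where c: "c \<in> hom B M C" and cp2: "cmp B c p2 = cmp B y b"
    and ext: "push B M (idm B A) (ezero B M A) = pull B A c d"
    using ET3_morphism[OF i1 p2 x y realizes_split[OF A M bp] r id_hom[OF A] b bi1] by blast
  have "c = cmp B (cmp B c p2) i2"
    using comp_assoc[OF i2 p2 c] p2i2 comp_id[OF c] by simp
  also have "\<dots> = y"
    using cp2 comp_assoc[OF i2 b y] bi2 comp_id[OF y] by simp
  finally show ?thesis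
    using ext push_id[OF M A ezero_Ext[OF M A]] by simp
qed

lemma extends_along_inflation:
  assumes x: "x \<in> hom B A M" and y: "y \<in> hom B M C" and r: "realizes B d x y"
    and w: "w \<in> hom B A W" and split: "push B C w d = ezero B C W"
  shows "\<exists>\<phi>\<in>hom B M W. cmp B \<phi> x = w"
proof -
  have W: "W \<in> Ob B" and C: "C \<in> Ob B"
    using hom_Ob[OF w] hom_Ob[OF y] by auto
  obtain S i1 i2 p1 p2 where bp: "is_biprod B W C S i1 i2 p1 p2"
    using biprod_exists[OF W C] .
  then have i1: "i1 \<in> hom B W S" and p1: "p1 \<in> hom B S W" and p2: "p2 \<in> hom B S C"
    and p1i1: "cmp B p1 i1 = idm B W"
    unfolding is_biprod_def by auto
  have "push B C w d = pull B W (idm B C) (ezero B C W)"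
    using split pull_id[OF C W ezero_Ext[OF C W]] by simp
  then obtain b where b: "b \<in> hom B M S" and bx: "cmp B b x = cmp B i1 w"
    using ET2_morphism[OF x y i1 p2 r realizes_split[OF W C bp] w id_hom[OF C]] by blast
  have "cmp B (cmp B p1 b) x = w"
    using comp_assoc[OF x b p1] bx comp_assoc[OF w i1 p1] p1i1 id_comp[OF w] by simp
  then show ?thesis
    using comp_hom[OF b p1] by blast
qed

lemma lifts_along_deflation:
  assumes x: "x \<in> hom B A M" and y: "y \<in> hom B M C" and r: "realizes B d x y"
    and w: "w \<in> hom B W C" and split: "pull B A w d = ezero B W A"
  shows "\<exists>\<psi>\<in>hom B W M. cmp B y \<psi> = w"
proof -
  have A: "A \<in> Ob B" and W: "W \<in> Ob B"
    using hom_Ob[OF x] hom_Ob[OF w] by auto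
  obtain S i1 i2 p1 p2 where bp: "is_biprod B A W S i1 i2 p1 p2"
    using biprod_exists[OF A W] .
  then have i1: "i1 \<in> hom B A S" and i2: "i2 \<in> hom B W S" and p2: "p2 \<in> hom B S W"
    and p2i2: "cmp B p2 i2 = idm B W"
    unfolding is_biprod_def by auto
  have "push B W (idm B A) (ezero B W A) = pull B A w d"
    using split push_id[OF W A ezero_Ext[OF W A]] by simp
  then obtain b where b: "b \<in> hom B S M" and yb: "cmp B y b = cmp B w p2"
    using ET2_morphism[OF i1 p2 x y realizes_split[OF A W bp] r id_hom[OF A] w] by blast
  have "cmp B y (cmp B b i2) = w"
    using comp_assoc[OF i2 b y] yb comp_assoc[OF i2 p2 w] p2i2 comp_id[OF w] by simp
  then show ?thesis
    using comp_hom[OF i2 b] by blast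
qed

lemma projective_pull_ezero:
  assumes P: "projective B P" and x: "x \<in> hom B A M" and y: "y \<in> hom B M C"
    and r: "realizes B d x y" and d: "d \<in> Ext B C A" and c: "c \<in> hom B P C"
  shows "pull B A c d = ezero B P A"
proof -
  have "conflation B A M C x y"
    unfolding conflation_def using x y r d by blast
  then obtain \<psi> where \<psi>: "\<psi> \<in> hom B P M" and y\<psi>: "cmp B y \<psi> = c"
    using P c unfolding projective_def by blast
  have A: "A \<in> Ob B"
    using hom_Ob[OF x] by simp
  have "pull B A c d = pull B A \<psi> (pull B A y d)"
    using pull_comp[OF A y \<psi> d] y\<psi> by simp
  then show ?thesis
    using pull_deflation_ezero[OF x y r d] pull_ezero[OF A \<psi>] by simp
qed

lemma Omega_to_perp1_factors_through_projective:
  assumes U: "U \<in> Omega B \<C>" and T: "T \<in> perp1 B \<C>" and h: "h \<in> hom B U T"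
  obtains P a \<phi> where "projective B P" "a \<in> hom B U P" "\<phi> \<in> hom B P T" "cmp B \<phi> a = h"
proof -
  obtain P C a b \<delta> where P: "projective B P" and C: "C \<in> \<C>" and a: "a \<in> hom B U P"
    and b: "b \<in> hom B P C" and \<delta>: "\<delta> \<in> Ext B C U" and r: "realizes B \<delta> a b"
    using U unfolding Omega_def conflation_def by blast
  have "Ext_zero B C T"
    using T C unfolding perp1_def by blast
  then have "push B C h \<delta> = ezero B C T"
    using push_Ext[OF hom_Ob(2)[OF b] h \<delta>] unfolding Ext_zero_def by blast
  then show ?thesis
    using extends_along_inflation[OF a b r h] P a that by blast
qed

lemma pullback_deflation_right_approx:
  assumes T: "T \<in> perp1 B \<C>"
    and y: "y \<in> hom B Y P" and p: "p \<in> hom B P T" and r: "realizes B d y p" and d: "d \<in> Ext B T Y"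
    and t: "t \<in> hom B X T" and g: "g \<in> hom B Y U" and f: "f \<in> hom B U X"
    and rt: "realizes B (pull B Y t d) g f" and U: "U \<in> Omega B \<C>"
  shows "right_approx B (Omega B \<C>) f U X"
  unfolding right_approx_def
proof (intro conjI ballI U f)
  fix U' h
  assume U': "U' \<in> Omega B \<C>" and h: "h \<in> hom B U' X"
  obtain P' a \<phi> where P': "projective B P'" and a: "a \<in> hom B U' P'" and \<phi>: "\<phi> \<in> hom B P' T"
    and \<phi>a: "cmp B \<phi> a = cmp B t h"
    using Omega_to_perp1_factors_through_projective[OF U' T comp_hom[OF h t]] .
  have Y: "Y \<in> Ob B"
    using hom_Ob[OF y] by simp
  have "pull B Y h (pull B Y t d) = pull B Y a (pull B Y \<phi> d)"
    using pull_comp[OF Y t h d] pull_comp[OF Y \<phi> a d] \<phi>a by simp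
  also have "\<dots> = ezero B U' Y"
    using projective_pull_ezero[OF P' y p r d \<phi>] pull_ezero[OF Y a] by simp
  finally show "\<exists>k\<in>hom B U' U. cmp B f k = h"
    using lifts_along_deflation[OF g f rt h] by blast
qed

lemma extends_along_factor_of_inflation:
  assumes y: "y \<in> hom B Y P" and p: "p \<in> hom B P T" and r: "realizes B d y p" and d: "d \<in> Ext B T Y"
    and g: "g \<in> hom B Y U" and u: "u \<in> hom B U P" and ug: "cmp B u g = y"
    and T: "Ext_zero B T Z" and h: "h \<in> hom B Y Z"
  shows "\<exists>k\<in>hom B U Z. cmp B k g = h"
proof -
  have "push B T h d = ezero B T Z"
    using T push_Ext[OF hom_Ob(2)[OF p] h d] unfolding Ext_zero_def by blast
  then obtain \<phi> where \<phi>: "\<phi> \<in> hom B P Z" and "cmp B \<phi> y = h"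
    using extends_along_inflation[OF y p r h] by blast
  then show ?thesis
    using comp_assoc[OF g u \<phi>] ug comp_hom[OF u \<phi>] by metis
qed

end

theorem mainTheorem6:
  fixes B :: "('o,'m,'e) extri" and \<C> :: "'o set" and X :: 'o
  assumes "extriangulated B"
    and "enough_projectives B" and "enough_injectives B"
    and "cotorsion_pair B \<C> (perp1 B \<C>)"
    and "X \<in> Ob B"
  shows "\<exists>T0 C0 P0 Y0 U0 t s0 y0 p0 u0 v0 g0 f0.
           conflation B X T0 C0 t s0 \<and> T0 \<in> perp1 B \<C> \<and> C0 \<in> \<C> \<and>
           conflation B Y0 P0 T0 y0 p0 \<and> projective B P0 \<and>
           conflation B U0 P0 C0 u0 v0 \<and>
           conflation B Y0 U0 X g0 f0 \<and>
           cmp B u0 g0 = y0 \<and> cmp B t f0 = cmp B p0 u0 \<and>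
           right_approx B (Omega B \<C>) f0 U0 X \<and>
           (\<forall>Z\<in>Ob B. Ext_zero B T0 Z \<longrightarrow>
              (\<forall>h\<in>hom B Y0 Z. \<exists>k\<in>hom B U0 Z. cmp B k g0 = h))"
proof -
  interpret extriangulated_category B
    using assms(1) by unfold_locales
  obtain T0 C0 t s0 d' where c1: "conflation B X T0 C0 t s0" and T0: "T0 \<in> perp1 B \<C>"
    and C0: "C0 \<in> \<C>" and t: "t \<in> hom B X T0" and s0: "s0 \<in> hom B T0 C0"
    and r1: "realizes B d' t s0"
    using assms(4,5) unfolding cotorsion_pair_def conflation_def by blast
  obtain Y0 P0 y0 p0 d where c2: "conflation B Y0 P0 T0 y0 p0" and P0: "projective B P0"
    and y0: "y0 \<in> hom B Y0 P0" and p0: "p0 \<in> hom B P0 T0"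
    and d: "d \<in> Ext B T0 Y0" and r2: "realizes B d y0 p0"
    using assms(2) hom_Ob(2)[OF t] unfolding enough_projectives_def conflation_def by blast
  obtain U0 u0 g0 f0 d'' where u0: "u0 \<in> hom B U0 P0" and g0: "g0 \<in> hom B Y0 U0"
    and f0: "f0 \<in> hom B U0 X" and d'': "d'' \<in> Ext B C0 U0"
    and r3: "realizes B d'' u0 (cmp B s0 p0)" and r4: "realizes B (pull B Y0 t d) g0 f0"
    and u0g0: "cmp B u0 g0 = y0" and p0u0: "cmp B p0 u0 = cmp B t f0"
    using ET4opE[OF y0 p0 t s0 r2 r1] .
  have c3: "conflation B U0 P0 C0 u0 (cmp B s0 p0)"
    unfolding conflation_def using u0 comp_hom[OF p0 s0] d'' r3 by blast
  have c4: "conflation B Y0 U0 X g0 f0"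
    unfolding conflation_def using g0 f0 pull_Ext[OF hom_Ob(1)[OF y0] t d] r4 by blast
  have U0: "U0 \<in> Omega B \<C>"
    unfolding Omega_def using c3 P0 C0 by blast
  have "\<exists>k\<in>hom B U0 Z. cmp B k g0 = h" if "Ext_zero B T0 Z" "h \<in> hom B Y0 Z" for Z h
    using extends_along_factor_of_inflation[OF y0 p0 r2 d g0 u0 u0g0 that] .
  then show ?thesis
    using c1 T0 C0 c2 P0 c3 c4 u0g0 p0u0 U0
      pullback_deflation_right_approx[OF T0 y0 p0 r2 d t g0 f0 r4 U0] by metis
qed

end
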